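(* Let $T:[0,1]\to[0,1]$ be the tent map, $T(x)=2x$ for $x<1/2$ and $T(x)=2(1-x)$ for $x\ge1/2$, and let $\Lambda=\{\tau\in[0,1]: T^m(\tau)\le\tau\ \text{for all } m\ge0\}$. Let $K_1=\overline{1}$ and, for $j\ge1$, let $K_{j+1}$ be the periodic sequence whose repeating block is obtained by writing the repeating block of $K_j$ twice and replacing the last symbol by its complement. For $s=s_1s_2\dots\in\{0,1\}^{\mathbb N}$ let $\tau(s)=\sum_{k\ge1}t_k2^{-k}$ with $t_k=\sum_{i=1}^k s_i\pmod 2$, and put $\tau_j=\tau(K_j)$. Then $\tau_j\in\Lambda$ for all $j\ge1$ and $\tau_1<\tau_2<\tau_3<\cdots$. *)

theory Defs
  imports Complex_Main
begin

definition tent :: "real \<Rightarrow> real" where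
  "tent x = (if x < 1/2 then 2 * x else 2 * (1 - x))"

definition Lambda :: "real set" where
  "Lambda = {t \<in> {0..1}. \<forall>m::nat. (tent ^^ m) t \<le> t}"

text \<open>Repeating block of K_(j+1), symbols 0/1 as nat. Kblock 0 is the block of K_1.\<close>
primrec Kblock :: "nat \<Rightarrow> nat list" where
  "Kblock 0 = [1]"
| "Kblock (Suc j) = Kblock j @ butlast (Kblock j) @ [1 - last (Kblock j)]"

text \<open>Sequences s = s_1 s_2 ... are functions nat => nat, indexed from 1 (value at 0 unused).\<close>
definition K :: "nat \<Rightarrow> nat \<Rightarrow> nat" where
  "K j k = Kblock (j - 1) ! ((k - 1) mod length (Kblock (j - 1)))"

definition tseq :: "(nat \<Rightarrow> nat) \<Rightarrow> nat \<Rightarrow> nat" where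
  "tseq s k = (\<Sum>i=1..k. s i) mod 2"

definition tau :: "(nat \<Rightarrow> nat) \<Rightarrow> real" where
  "tau s = (\<Sum>n. real (tseq s (Suc n)) / 2 ^ Suc n)"

end

theory Submission
  imports Defs "HOL-Library.Fun_Lexorder"
begin

text \<open>
  Let t be the sequence of partial sums of s modulo 2, so that tau s has the binary digits t.
  On binary digits the tent map drops the first digit and complements the remaining ones if
  that digit was 1. Hence T^m (tau s) has the digits t(m+k) + t(m) mod 2, and since binary
  expansion is monotone for the lexicographic order, tau s lies in Lambda as soon as each of
  these sequences is lexicographically at most t.

  The block of K (j+1) is the prefix of length 2^j of the period-doubling sequence, the
  sequence of first differences of the Thue-Morse sequence, so the t-sequence of K j is the
  Thue-Morse word of length 2^j repeated periodically. The Thue-Morse morphism 0 -> 01,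
  1 -> 10 maps the word of period 2^j to the word of period 2^(j+1); it commutes with even
  shifts and makes odd shifts lexicographically smaller, so lexicographic maximality follows
  by induction on j. Consecutive periodic words agree below position 2^j, where the longer
  one has digit 1 and the shorter one digit 0; this gives tau_j < tau_(j+1).
\<close>

section \<open>Binary expansions of 0-1 sequences\<close>

text \<open>As in tau, sequences are indexed from 1: the digit d 0 is ignored.\<close>

definition binary_value :: "(nat \<Rightarrow> nat) \<Rightarrow> real" where
  "binary_value d = (\<Sum>n. real (d (Suc n)) / 2 ^ Suc n)"

lemma tau_eq_binary_value: "tau s = binary_value (tseq s)"
  by (simp add: tau_def binary_value_def)

lemma binary_value_cong: "(\<And>n. 0 < n \<Longrightarrow> a n = b n) \<Longrightarrow> binary_value a = binary_value b"
  by (simp add: binary_value_def)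

lemma sums_inverse_powers_of_2: "(\<lambda>n. 1 / (2::real) ^ Suc n) sums 1"
  using power_half_series by (simp add: power_one_over)

lemma binary_value_sums:
  assumes "\<forall>n. d n \<le> 1"
  shows "(\<lambda>n. real (d (Suc n)) / 2 ^ Suc n) sums binary_value d"
proof -
  have "summable (\<lambda>n. real (d (Suc n)) / 2 ^ Suc n)"
    by (rule summable_comparison_test'[OF sums_summable[OF sums_inverse_powers_of_2], of 0])
      (use assms in \<open>simp add: divide_right_mono\<close>)
  then show ?thesis
    by (simp add: binary_value_def summable_sums)
qed

lemma binary_value_Suc:
  assumes "\<forall>n. d n \<le> 1"
  shows "binary_value d = real (d 1) / 2 + binary_value (\<lambda>n. d (Suc n)) / 2"
proof -
  have "(\<lambda>n. real (d (Suc (Suc n))) / 2 ^ Suc (Suc n)) sums (binary_value (\<lambda>n. d (Suc n)) / 2)"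
    using sums_divide[OF binary_value_sums[of "\<lambda>n. d (Suc n)"], of 2] assms
    by (simp add: mult.commute)
  then have "(\<lambda>n. real (d (Suc n)) / 2 ^ Suc n) sums
      (binary_value (\<lambda>n. d (Suc n)) / 2 + real (d 1) / 2)"
    using sums_Suc[of "\<lambda>n. real (d (Suc n)) / 2 ^ Suc n"] by simp
  then show ?thesis
    using sums_unique2[OF _ binary_value_sums[OF assms]] by simp
qed

lemma binary_value_complement:
  assumes "\<forall>n. d n \<le> 1"
  shows "binary_value (\<lambda>n. 1 - d n) = 1 - binary_value d"
proof -
  have "(\<lambda>n. 1 / 2 ^ Suc n - real (d (Suc n)) / 2 ^ Suc n) sums (1 - binary_value d)"
    by (rule sums_diff[OF sums_inverse_powers_of_2 binary_value_sums[OF assms]])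
  moreover have "real (1 - d (Suc n)) = 1 - real (d (Suc n))" for n
    using assms by simp
  ultimately have "(\<lambda>n. real (1 - d (Suc n)) / 2 ^ Suc n) sums (1 - binary_value d)"
    by (simp add: diff_divide_distrib)
  then show ?thesis
    using sums_unique2[OF _ binary_value_sums] by simp
qed

lemma binary_value_nonneg:
  assumes "\<forall>n. d n \<le> 1"
  shows "0 \<le> binary_value d"
  using sums_le[OF _ sums_zero binary_value_sums[OF assms]] by simp

lemma binary_value_le_1:
  assumes "\<forall>n. d n \<le> 1"
  shows "binary_value d \<le> 1"
  using binary_value_complement[OF assms] binary_value_nonneg[of "\<lambda>n. 1 - d n"] by simp

lemma binary_value_less_1:
  assumes "\<forall>n. d n \<le> 1" and "0 < n" and "d n = 0"
  shows "binary_value d < 1"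
  using assms
proof (induction n arbitrary: d)
  case 0
  then show ?case by simp
next
  case (Suc n)
  have tail_bits: "\<forall>i. d (Suc i) \<le> 1"
    using Suc.prems(1) by simp
  have "binary_value (\<lambda>i. d (Suc i)) \<le> 1"
    using binary_value_le_1[OF tail_bits] .
  moreover have "binary_value (\<lambda>i. d (Suc i)) < 1" if "n > 0"
    using Suc.IH[OF tail_bits that] Suc.prems(3) by simp
  moreover have "real (d 1) \<le> 1" and "n = 0 \<Longrightarrow> d 1 = 0"
    using Suc.prems by auto
  ultimately show ?case
    using binary_value_Suc[OF Suc.prems(1)] by (cases "n = 0") auto
qed

lemma binary_value_lex_le:
  assumes "\<forall>n. a n \<le> 1" and "\<forall>n. b n \<le> 1"
    and "0 < k" and "\<forall>i<k. a i = b i" and "a k < b k"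
  shows "binary_value a \<le> binary_value b"
  using assms
proof (induction k arbitrary: a b)
  case 0
  then show ?case by simp
next
  case (Suc k)
  have tail_bits: "\<forall>i. a (Suc i) \<le> 1" "\<forall>i. b (Suc i) \<le> 1"
    using Suc.prems(1,2) by simp_all
  have "binary_value (\<lambda>i. a (Suc i)) \<le> binary_value (\<lambda>i. b (Suc i))" if "k > 0"
    using Suc.IH[OF tail_bits that] Suc.prems(4,5) by simp
  moreover have "a 1 = b 1" if "k > 0"
    using Suc.prems(4) that by simp
  moreover have "a 1 = 0" "b 1 = 1" if "k = 0"
    using spec[OF Suc.prems(2), of 1] Suc.prems(5) that by auto
  ultimately show ?case
    using binary_value_Suc[OF Suc.prems(1)] binary_value_Suc[OF Suc.prems(2)]
      binary_value_le_1[OF tail_bits(1)] binary_value_nonneg[OF tail_bits(2)]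
    by (cases "k = 0") auto
qed

lemma binary_value_lex_less:
  assumes "\<forall>n. a n \<le> 1" and "\<forall>n. b n \<le> 1"
    and "0 < k" and "\<forall>i<k. a i = b i" and "a k < b k" and "k < n" and "a n = 0"
  shows "binary_value a < binary_value b"
  using assms
proof (induction k arbitrary: a b n)
  case 0
  then show ?case by simp
next
  case (Suc k)
  have tail_bits: "\<forall>i. a (Suc i) \<le> 1" "\<forall>i. b (Suc i) \<le> 1"
    using Suc.prems(1,2) by simp_all
  obtain n' where n: "n = Suc n'" "k < n'"
    using Suc.prems(6) by (cases n) auto
  have "binary_value (\<lambda>i. a (Suc i)) < binary_value (\<lambda>i. b (Suc i))" if "k > 0"
    using Suc.IH[OF tail_bits that _ _ n(2)] Suc.prems(4,5,7) n(1) by simp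
  moreover have "a 1 = b 1" if "k > 0"
    using Suc.prems(4) that by simp
  moreover have "a 1 = 0" "b 1 = 1" if "k = 0"
    using spec[OF Suc.prems(2), of 1] Suc.prems(5) that by auto
  moreover have "binary_value (\<lambda>i. a (Suc i)) < 1"
    using binary_value_less_1[OF tail_bits(1), of n'] Suc.prems(7) n by simp
  ultimately show ?case
    using binary_value_Suc[OF Suc.prems(1)] binary_value_Suc[OF Suc.prems(2)]
      binary_value_nonneg[OF tail_bits(2)]
    by (cases "k = 0") auto
qed

section \<open>The tent map on binary expansions\<close>

definition tent_shift :: "nat \<Rightarrow> (nat \<Rightarrow> nat) \<Rightarrow> nat \<Rightarrow> nat" where
  "tent_shift m d k = (d (m + k) + d m) mod 2"

lemma tent_shift_le_1: "tent_shift m d k \<le> 1"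
  by (simp add: tent_shift_def)

lemma add_mod_2_cancel: "((a + c) mod 2 + (b + c) mod 2) mod 2 = (a + b) mod (2::nat)"
proof -
  have "((a + c) mod 2 + (b + c) mod 2) mod 2 = (a + b + 2 * c) mod 2"
    by (simp add: mod_add_eq add_ac mult_2)
  then show ?thesis by simp
qed

lemma tent_shift_Suc: "tent_shift 1 (tent_shift m d) = tent_shift (Suc m) d"
  by (rule ext) (simp add: tent_shift_def add_mod_2_cancel)

lemma tent_binary_value:
  assumes bits: "\<forall>n. d n \<le> 1"
  shows "tent (binary_value d) = binary_value (tent_shift 1 d)"
proof -
  define w where "w = binary_value (\<lambda>n. d (Suc n))"
  have tail_bits: "\<forall>n. d (Suc n) \<le> 1"
    using bits by simp
  have w: "0 \<le> w" "w \<le> 1"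
    unfolding w_def using binary_value_nonneg[OF tail_bits] binary_value_le_1[OF tail_bits] .
  have bits_mod: "d n mod 2 = d n" for n
    using spec[OF bits, of n] by simp
  have bits_flip: "Suc (d n) mod 2 = 1 - d n" for n
    using spec[OF bits, of n] by (cases "d n") auto
  have "d 1 = 0 \<or> d 1 = 1"
    using spec[OF bits, of 1] by auto
  then show ?thesis
  proof
    assume d1: "d 1 = 0"
    have "binary_value (tent_shift 1 d) = w"
      unfolding w_def using d1 by (intro binary_value_cong) (simp add: tent_shift_def bits_mod)
    moreover have "binary_value d = w / 2"
      using binary_value_Suc[OF bits] d1 by (simp add: w_def)
    ultimately show ?thesis
      using w by (simp add: tent_def)
  next
    assume d1: "d 1 = 1"
    have "binary_value (tent_shift 1 d) = binary_value (\<lambda>n. 1 - d (Suc n))"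
      using d1 by (intro binary_value_cong) (simp add: tent_shift_def bits_flip)
    then have "binary_value (tent_shift 1 d) = 1 - w"
      unfolding w_def using binary_value_complement[OF tail_bits] by simp
    moreover have "binary_value d = 1 / 2 + w / 2"
      using binary_value_Suc[OF bits] d1 by (simp add: w_def)
    ultimately show ?thesis
      using w by (simp add: tent_def)
  qed
qed

lemma funpow_tent_binary_value:
  assumes "\<forall>n. d n \<le> 1" and "d 0 = 0"
  shows "(tent ^^ m) (binary_value d) = binary_value (tent_shift m d)"
proof (induction m)
  case 0
  have "d n mod 2 = d n" for n
    using spec[OF assms(1), of n] by simp
  then have "tent_shift 0 d = d"
    using assms(2) by (simp add: tent_shift_def fun_eq_iff)
  then show ?case by simp
next
  case (Suc m)
  have "(tent ^^ Suc m) (binary_value d) = tent (binary_value (tent_shift m d))"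
    using Suc.IH by simp
  also have "\<dots> = binary_value (tent_shift 1 (tent_shift m d))"
    by (intro tent_binary_value allI tent_shift_le_1)
  finally show ?case
    by (simp only: tent_shift_Suc)
qed

definition tent_maximal :: "(nat \<Rightarrow> nat) \<Rightarrow> bool" where
  "tent_maximal d \<longleftrightarrow> (\<forall>m. less_fun (tent_shift m d) d \<or> tent_shift m d = d)"

lemma binary_value_in_Lambda:
  assumes bits: "\<forall>n. d n \<le> 1" and "d 0 = 0" and "tent_maximal d"
  shows "binary_value d \<in> Lambda"
proof -
  have "binary_value (tent_shift m d) \<le> binary_value d" for m
  proof (cases "tent_shift m d = d")
    case False
    have "less_fun (tent_shift m d) d \<or> tent_shift m d = d"
      using \<open>tent_maximal d\<close> unfolding tent_maximal_def by (rule spec)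
    with False have "less_fun (tent_shift m d) d"
      by simp
    then obtain k where k: "tent_shift m d k < d k" "\<forall>i<k. tent_shift m d i = d i"
      unfolding less_fun_def by blast
    have "0 < k"
      using k(1) \<open>d 0 = 0\<close> by (cases k) auto
    show ?thesis
      using binary_value_lex_le[OF _ bits \<open>0 < k\<close> k(2,1)] tent_shift_le_1 by blast
  qed simp
  then show ?thesis
    unfolding Lambda_def using funpow_tent_binary_value[OF assms(1,2)]
      binary_value_nonneg[OF bits] binary_value_le_1[OF bits] by simp
qed

section \<open>The Thue-Morse and period-doubling sequences\<close>

fun thue_morse :: "nat \<Rightarrow> nat" where
  "thue_morse n = (if n = 0 then 0 else (n mod 2 + thue_morse (n div 2)) mod 2)"

declare thue_morse.simps [simp del]

lemma thue_morse_0 [simp]: "thue_morse 0 = 0"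
  by (simp add: thue_morse.simps)

lemma thue_morse_le_1: "thue_morse n \<le> 1"
  by (subst thue_morse.simps) auto

lemma thue_morse_mod_2 [simp]: "thue_morse n mod 2 = thue_morse n"
  using thue_morse_le_1[of n] by simp

lemma thue_morse_double [simp]: "thue_morse (2 * n) = thue_morse n"
  by (cases "n = 0") (simp_all add: thue_morse.simps[of "2 * n"])

lemma thue_morse_Suc_double [simp]: "thue_morse (Suc (2 * n)) = 1 - thue_morse n"
  using thue_morse_le_1[of n] by (subst thue_morse.simps) (auto simp: le_Suc_eq)

lemma thue_morse_1 [simp]: "thue_morse (Suc 0) = 1"
  by (subst thue_morse.simps) simp

lemma thue_morse_power_of_2 [simp]: "thue_morse (2 ^ j) = 1"
proof (induction j)
  case 0
  show ?case by simp
qed (simp del: power_Suc add: power_Suc[of 2])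

lemma thue_morse_add_power_of_2:
  assumes "n < 2 ^ j"
  shows "thue_morse (n + 2 ^ j) = 1 - thue_morse n"
  using assms
proof (induction j arbitrary: n)
  case 0
  then show ?case by simp
next
  case (Suc j)
  have IH: "thue_morse (n div 2 + 2 ^ j) = 1 - thue_morse (n div 2)"
    using Suc by (intro Suc.IH) auto
  show ?case
  proof (cases "even n")
    case True
    then have "n + 2 ^ Suc j = 2 * (n div 2 + 2 ^ j)" and "n = 2 * (n div 2)"
      by auto
    then show ?thesis
      using IH by (metis thue_morse_double)
  next
    case False
    then have "n + 2 ^ Suc j = Suc (2 * (n div 2 + 2 ^ j))" and "n = Suc (2 * (n div 2))"
      by auto
    then show ?thesis
      using IH thue_morse_le_1[of "n div 2"] by (metis thue_morse_Suc_double)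
  qed
qed

definition period_doubling :: "nat \<Rightarrow> nat" where
  "period_doubling n = (thue_morse (Suc n) + thue_morse n) mod 2"

lemma period_doubling_add_power_of_2:
  assumes "Suc n < 2 ^ j"
  shows "period_doubling (n + 2 ^ j) = period_doubling n"
  using assms thue_morse_add_power_of_2[of n j] thue_morse_add_power_of_2[of "Suc n" j]
    thue_morse_le_1[of n] thue_morse_le_1[of "Suc n"]
  by (auto simp: period_doubling_def le_Suc_eq)

lemma period_doubling_last:
  "period_doubling (2 ^ Suc j - 1) = 1 - period_doubling (2 ^ j - 1)"
proof -
  define L :: nat where "L = 2 ^ j"
  define t where "t = thue_morse (L - 1)"
  have "1 \<le> L"
    by (simp add: L_def)
  then have last: "2 ^ Suc j - 1 = (L - 1) + L" and top: "Suc (2 ^ Suc j - 1) = 2 ^ Suc j"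
    and L: "Suc (L - 1) = L"
    by (simp_all add: L_def)
  have "thue_morse ((L - 1) + L) = 1 - t"
    unfolding t_def L_def by (rule thue_morse_add_power_of_2) simp
  then have "period_doubling (2 ^ Suc j - 1) = (1 + (1 - t)) mod 2"
    unfolding period_doubling_def top unfolding last by simp
  moreover have "period_doubling (L - 1) = (1 + t) mod 2"
    unfolding period_doubling_def L t_def by (simp add: L_def)
  ultimately show ?thesis
    using thue_morse_le_1[of "L - 1"] by (cases t) (auto simp: L_def t_def)
qed

lemma Kblock_length: "length (Kblock j) = 2 ^ j"
  by (induction j) simp_all

lemma Kblock_nth:
  assumes "i < 2 ^ j"
  shows "Kblock j ! i = period_doubling i"
  using assms
proof (induction j arbitrary: i)
  case 0
  then show ?case
    by (simp add: period_doubling_def)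
next
  case (Suc j)
  define L :: nat where "L = 2 ^ j"
  have length: "length (Kblock j) = L" and "1 \<le> L"
    by (simp_all add: Kblock_length L_def)
  have "i < 2 * L"
    using Suc.prems by (simp add: L_def)
  consider "i < L" | "L \<le> i" "Suc (i - L) < L" | "i = (L - 1) + L"
    using \<open>i < 2 * L\<close> \<open>1 \<le> L\<close> by linarith
  then show ?case
  proof cases
    case 1
    then show ?thesis
      using Suc.IH[of i] length by (simp add: nth_append L_def)
  next
    case 2
    then have "Kblock (Suc j) ! i = Kblock j ! (i - L)"
      using length by (auto simp: nth_append nth_butlast)
    also have "\<dots> = period_doubling (i - L + L)"
      using 2 Suc.IH[of "i - L"] period_doubling_add_power_of_2[of "i - L" j] by (simp add: L_def)
    finally show ?thesis
      using 2 by simp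
  next
    case 3
    have "Kblock j \<noteq> []"
      using length \<open>1 \<le> L\<close> by auto
    then have "Kblock (Suc j) ! i = 1 - Kblock j ! (L - 1)"
      using 3 length by (simp add: nth_append last_conv_nth)
    also have "\<dots> = 1 - period_doubling (2 ^ j - 1)"
      using Suc.IH[of "L - 1"] \<open>1 \<le> L\<close> by (simp add: L_def)
    also have "\<dots> = period_doubling (2 ^ Suc j - 1)"
      by (rule period_doubling_last[symmetric])
    also have "2 ^ Suc j - 1 = i"
      using 3 \<open>1 \<le> L\<close> by (simp add: L_def)
    finally show ?thesis .
  qed
qed

lemma K_Suc: "K (Suc j) (Suc k) = period_doubling (k mod 2 ^ j)"
  by (simp add: K_def Kblock_length Kblock_nth)

definition periodic_thue_morse :: "nat \<Rightarrow> nat \<Rightarrow> nat" where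
  "periodic_thue_morse j n = thue_morse (n mod 2 ^ j)"

lemma periodic_thue_morse_le_1: "periodic_thue_morse j n \<le> 1"
  unfolding periodic_thue_morse_def by (rule thue_morse_le_1)

lemma add_mod_2_absorb: "(c + (a + c) mod 2) mod 2 = a mod (2::nat)"
proof -
  have "(c + (a + c) mod 2) mod 2 = (a + 2 * c) mod 2"
    by (simp add: mod_add_right_eq add_ac mult_2)
  then show ?thesis by simp
qed

lemma period_doubling_mod_power_of_2:
  assumes "Suc r < 2 ^ Suc j"
  shows "period_doubling (r mod 2 ^ j) = period_doubling r"
proof (cases "r < 2 ^ j")
  case False
  then have "r mod 2 ^ j = r - 2 ^ j" and "Suc (r - 2 ^ j) < 2 ^ j"
    using assms by (simp_all add: le_mod_geq)
  then show ?thesis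
    using period_doubling_add_power_of_2[of "r - 2 ^ j" j] False by simp
qed simp

lemma thue_morse_Suc_mod:
  assumes "r < 2 ^ Suc j"
  shows "thue_morse (Suc r mod 2 ^ Suc j) = (thue_morse r + period_doubling (r mod 2 ^ j)) mod 2"
proof (cases "Suc r < 2 ^ Suc j")
  case True
  then have "period_doubling (r mod 2 ^ j) = period_doubling r"
    by (rule period_doubling_mod_power_of_2)
  with True show ?thesis
    unfolding period_doubling_def by (simp add: add_mod_2_absorb del: power_Suc)
next
  case False
  then have top: "Suc r = 2 ^ Suc j"
    using assms by simp
  then have r: "r = (2 ^ j - 1) + 2 ^ j"
    by simp
  have "r mod 2 ^ j = 2 ^ j - 1"
    unfolding r mod_add_self2 by simp
  moreover have "2 ^ Suc j - 1 = r"
    using top by simp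
  then have "period_doubling r = 1 - period_doubling (2 ^ j - 1)"
    using period_doubling_last[of j] by simp
  moreover have "period_doubling r = (1 + thue_morse r) mod 2"
    unfolding period_doubling_def top by simp
  moreover have "period_doubling (2 ^ j - 1) \<le> 1"
    by (simp add: period_doubling_def)
  moreover note thue_morse_le_1[of r]
  ultimately have "(thue_morse r + period_doubling (r mod 2 ^ j)) mod 2 = 0"
    by (auto simp: le_Suc_eq)
  then show ?thesis
    using top by simp
qed

lemma tseq_Suc: "tseq s (Suc k) = (tseq s k + s (Suc k)) mod 2"
  by (simp add: tseq_def mod_add_left_eq)

lemma tseq_K:
  assumes "0 < j"
  shows "tseq (K j) = periodic_thue_morse j"
proof
  fix k
  obtain i where j: "j = Suc i"
    using assms by (cases j) auto
  show "tseq (K j) k = periodic_thue_morse j k"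
  proof (induction k)
    case 0
    then show ?case
      by (simp add: tseq_def periodic_thue_morse_def)
  next
    case (Suc k)
    define r where "r = k mod 2 ^ Suc i"
    have "r < 2 ^ Suc i" and "k mod 2 ^ i = r mod 2 ^ i" and "Suc k mod 2 ^ Suc i = Suc r mod 2 ^ Suc i"
      by (simp_all add: r_def mod_mod_cancel mod_Suc_eq)
    then show ?case
      using Suc.IH thue_morse_Suc_mod[of r i]
      by (simp add: tseq_Suc K_Suc periodic_thue_morse_def j r_def del: power_Suc)
  qed
qed

section \<open>Lexicographic maximality of the periodic Thue-Morse words\<close>

definition thue_morse_morphism :: "(nat \<Rightarrow> nat) \<Rightarrow> nat \<Rightarrow> nat" where
  "thue_morse_morphism w n = (if even n then w (n div 2) else 1 - w (n div 2))"

lemma periodic_thue_morse_Suc: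
  "periodic_thue_morse (Suc j) = thue_morse_morphism (periodic_thue_morse j)"
proof
  fix n
  have "n mod 2 ^ Suc j = 2 * (n div 2 mod 2 ^ j) + n mod (2::nat)"
    by (simp add: mod_mult2_eq)
  then show "periodic_thue_morse (Suc j) n = thue_morse_morphism (periodic_thue_morse j) n"
    by (cases "even n")
      (simp_all add: periodic_thue_morse_def thue_morse_morphism_def mod_2_eq_odd)
qed

lemma less_fun_thue_morse_morphism:
  assumes "less_fun a b"
  shows "less_fun (thue_morse_morphism a) (thue_morse_morphism b)"
proof -
  obtain k where "a k < b k" and "\<forall>i<k. a i = b i"
    using assms unfolding less_fun_def by blast
  then have "thue_morse_morphism a (2 * k) < thue_morse_morphism b (2 * k)"
    and "\<forall>i<2 * k. thue_morse_morphism a i = thue_morse_morphism b i"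
    by (auto simp: thue_morse_morphism_def)
  then show ?thesis
    unfolding less_fun_def by blast
qed

lemma tent_shift_even_thue_morse_morphism:
  assumes "\<forall>n. w n \<le> 1"
  shows "tent_shift (2 * i) (thue_morse_morphism w) = thue_morse_morphism (tent_shift i w)"
proof
  fix n
  have "w (i + n div 2) \<le> 1" and "w i \<le> 1"
    using assms by simp_all
  then show "tent_shift (2 * i) (thue_morse_morphism w) n = thue_morse_morphism (tent_shift i w) n"
    by (cases "even n") (auto simp: tent_shift_def thue_morse_morphism_def le_Suc_eq)
qed

text \<open>
  The morphic image starts with 0 1 1, whereas digits 1 and 2 of any odd shift of it
  add up to 1 modulo 2.
\<close>

lemma tent_shift_odd_thue_morse_morphism_less:
  assumes "\<forall>n. w n \<le> 1" and "w 0 = 0" and "w 1 = 1"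
  shows "less_fun (tent_shift (2 * i + 1) (thue_morse_morphism w)) (thue_morse_morphism w)"
proof -
  let ?u = "tent_shift (2 * i + 1) (thue_morse_morphism w)"
  have w: "thue_morse_morphism w 0 = 0" "thue_morse_morphism w 1 = 1" "thue_morse_morphism w 2 = 1"
    using assms(2,3) by (simp_all add: thue_morse_morphism_def)
  have u0: "?u 0 = 0"
    by (simp add: tent_shift_def)
  have "w (Suc i) \<le> 1" and "w i \<le> 1"
    using assms(1) by simp_all
  then have "?u 1 = 0 \<or> (?u 1 = 1 \<and> ?u 2 = 0)"
    by (auto simp: tent_shift_def thue_morse_morphism_def le_Suc_eq)
  then show ?thesis
  proof
    assume "?u 1 = 0"
    then show ?thesis
      using u0 w unfolding less_fun_def by (intro exI[of _ 1]) simp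
  next
    assume "?u 1 = 1 \<and> ?u 2 = 0"
    then show ?thesis
      using u0 w unfolding less_fun_def by (intro exI[of _ 2]) (auto simp: less_2_cases_iff)
  qed
qed

lemma tent_maximal_thue_morse_morphism:
  assumes "\<forall>n. w n \<le> 1" and "w 0 = 0" and "w 1 = 1" and "tent_maximal w"
  shows "tent_maximal (thue_morse_morphism w)"
  unfolding tent_maximal_def
proof
  fix m
  show "less_fun (tent_shift m (thue_morse_morphism w)) (thue_morse_morphism w)
    \<or> tent_shift m (thue_morse_morphism w) = thue_morse_morphism w"
  proof (cases "even m")
    case True
    then obtain i where "m = 2 * i"
      by blast
    moreover have "less_fun (tent_shift i w) w \<or> tent_shift i w = w"
      using assms(4) unfolding tent_maximal_def by (rule spec)
    ultimately show ?thesis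
      using less_fun_thue_morse_morphism tent_shift_even_thue_morse_morphism[OF assms(1)] by metis
  next
    case False
    then obtain i where "m = 2 * i + 1"
      using oddE by blast
    then show ?thesis
      using tent_shift_odd_thue_morse_morphism_less[OF assms(1-3)] by blast
  qed
qed

lemma tent_maximal_periodic_thue_morse:
  assumes "0 < j"
  shows "tent_maximal (periodic_thue_morse j)"
  using assms
proof (induction j)
  case 0
  then show ?case by simp
next
  case (Suc j)
  show ?case
  proof (cases "j = 0")
    case True
    have "periodic_thue_morse 1 n = n mod 2" for n
      by (cases "even n") (auto simp: periodic_thue_morse_def odd_iff_mod_2_eq_one)
    moreover have "((m + k) mod 2 + m mod 2) mod 2 = k mod (2::nat)" for m k
      using add_mod_2_cancel[of k m 0] by (simp add: add.commute)
    ultimately have "tent_shift m (periodic_thue_morse 1) = periodic_thue_morse 1" for m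
      by (simp add: tent_shift_def fun_eq_iff)
    then show ?thesis
      using True by (simp add: tent_maximal_def)
  next
    case False
    have "\<forall>n. periodic_thue_morse j n \<le> 1"
      using periodic_thue_morse_le_1 by blast
    moreover have "periodic_thue_morse j 0 = 0" and "periodic_thue_morse j 1 = 1"
      using False by (simp_all add: periodic_thue_morse_def)
    ultimately show ?thesis
      unfolding periodic_thue_morse_Suc
      using tent_maximal_thue_morse_morphism Suc.IH False by blast
  qed
qed

lemma binary_value_periodic_thue_morse_less:
  "binary_value (periodic_thue_morse j) < binary_value (periodic_thue_morse (Suc j))"
proof (rule binary_value_lex_less[where k = "2 ^ j" and n = "2 ^ Suc j"])
  show "\<forall>i<2 ^ j. periodic_thue_morse j i = periodic_thue_morse (Suc j) i"
    by (simp add: periodic_thue_morse_def)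
  show "periodic_thue_morse j (2 ^ j) < periodic_thue_morse (Suc j) (2 ^ j)"
    by (simp add: periodic_thue_morse_def)
  show "periodic_thue_morse j (2 ^ Suc j) = 0"
    by (simp add: periodic_thue_morse_def)
qed (use periodic_thue_morse_le_1 in simp_all)

lemma tau_K: "0 < j \<Longrightarrow> tau (K j) = binary_value (periodic_thue_morse j)"
  by (simp add: tau_eq_binary_value tseq_K)

theorem mainTheorem7:
  shows "(\<forall>j\<ge>1. tau (K j) \<in> Lambda) \<and> (\<forall>j\<ge>1. tau (K j) < tau (K (Suc j)))"
proof (intro conjI allI impI)
  fix j :: nat
  assume "j \<ge> 1"
  have "binary_value (periodic_thue_morse j) \<in> Lambda"
    using \<open>j \<ge> 1\<close> periodic_thue_morse_le_1
    by (intro binary_value_in_Lambda tent_maximal_periodic_thue_morse)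
      (auto simp: periodic_thue_morse_def)
  then show "tau (K j) \<in> Lambda"
    using \<open>j \<ge> 1\<close> by (simp add: tau_K)
next
  fix j :: nat
  assume "j \<ge> 1"
  then show "tau (K j) < tau (K (Suc j))"
    using binary_value_periodic_thue_morse_less by (simp add: tau_K)
qed

end
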